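(* Let $G$ be the graph on $\{1,2,3,4\}$ with edge set $E=\{\{1,2\},\{2,3\},\{1,3\},\{3,4\},\{1,4\}\}$. If $x\in(\mathbb{R}^2)^4$ satisfies $\delta|_E(x)\in\mathcal L_0$, then $x$ is infinitesimally rigid, i.e. the Jacobian $\frac{\partial\,\delta|_E}{\partial x}(x)\in\mathbb{R}^{5\times 8}$ has rank $2\cdot4-3=5$.
   Context: For $x=(x_1,\dots,x_n)\in(\mathbb{R}^2)^n$ and a graph $G=(V,E)$ on $V=\{1,\dots,n\}$, $\delta|_E(x)=\big(\tfrac12\|x_i-x_j\|^2\big)_{\{i,j\}\in E}$. $\mathcal L=\{\delta|_E(x):x\in(\mathbb{R}^2)^n\}\subset\mathbb{R}^{|E|}$ and $\mathcal L_0$ denotes its interior in $\mathbb{R}^{|E|}$. The matrix $\frac{\partial\,\delta|_E}{\partial x}$ is the rigidity matrix. *)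

theory Defs
  imports "HOL-Analysis.Analysis" "HOL-Library.Numeral_Type"
begin

(* Vertices 1,2,3,4 are the elements of the numeral type 4 (where 4 = 0).
   Edges are indexed by the numeral type 5, in the order
   {1,2},{2,3},{1,3},{3,4},{1,4}. *)
definition edgeE :: "5 \<Rightarrow> 4 \<times> 4" where
  "edgeE k = (if k = 1 then (1,2) else if k = 2 then (2,3) else if k = 3 then (1,3)
              else if k = 4 then (3,4) else (1,4))"

definition deltaE :: "(real^2)^4 \<Rightarrow> real^5" where
  "deltaE x = (\<chi> k. (case edgeE k of (i, j) \<Rightarrow> (1/2) * (norm (x$i - x$j))\<^sup>2))"

end

theory Submission imports Defs begin

(* The graph G on {1,2,3,4} with edges 12, 23, 13, 34, 14 is the union of the two
   triangles 123 and 134 glued along the edge 13.  Write Q(a,b,c) for the Heron form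
   2(ab+bc+ca) - a^2 - b^2 - c^2.  For a triangle with half squared side lengths
   a, b, c, Heron's formula says Q(a,b,c) = (twice its signed area)^2.

   Plan of the proof.
   (1) deltaE is differentiable; its derivative is the rigidity map
       h |-> ((x_i - x_j) . (h_i - h_j))_{ij in E}.
   (2) On the image of deltaE the two triangle coordinates (y1,y2,y3) and (y3,y4,y5)
       satisfy Q >= 0 and are nonnegative.  A point with Q = 0 (a degenerate triangle)
       is never interior to such a set: shrinking all three coordinates by a small
       t > 0 makes Q negative.  Hence if deltaE x is interior to the image, both
       triangles of x are nondegenerate.
   (3) If both triangles are nondegenerate, the rigidity map is onto R^5, which is
       solved explicitly by one dot product equation and two 2x2 linear systems. *)

lemma half_sq_dist_has_derivative:
  fixes x :: "'a::real_inner ^ 'n"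
  shows "((\<lambda>y. (1/2) * (norm (y$i - y$j))\<^sup>2) has_derivative
           (\<lambda>h. (x$i - x$j) \<bullet> (h$i - h$j))) (at x)"
proof -
  have nth: "((\<lambda>y. y $ k) has_derivative (\<lambda>h. h $ k)) F" for k and F :: "('a^'n) filter"
    by (rule bounded_linear.has_derivative[OF bounded_linear_vec_nth has_derivative_ident])
  have "((\<lambda>y. (1/2) * ((y$i - y$j) \<bullet> (y$i - y$j))) has_derivative
          (\<lambda>h. (1/2) * ((x$i - x$j) \<bullet> (h$i - h$j) + (h$i - h$j) \<bullet> (x$i - x$j)))) (at x)"
    by (rule nth derivative_eq_intros refl)+
  then show ?thesis
    by (simp add: power2_norm_eq_inner inner_commute)
qed

definition rigidity_map :: "(real^2)^4 \<Rightarrow> (real^2)^4 \<Rightarrow> real^5" where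
  "rigidity_map x h = (\<chi> k. case edgeE k of (i, j) \<Rightarrow> (x$i - x$j) \<bullet> (h$i - h$j))"

lemma deltaE_has_derivative: "(deltaE has_derivative rigidity_map x) (at x)"
proof -
  have "((\<lambda>y. deltaE y $ k) has_derivative (\<lambda>h. rigidity_map x h $ k)) (at x)" for k
    using half_sq_dist_has_derivative[of _ _ x]
    by (cases "edgeE k") (simp add: deltaE_def rigidity_map_def)
  then show ?thesis
    by (subst has_derivative_componentwise_within) (auto simp: Basis_vec_def inner_axis)
qed

definition heron :: "real \<Rightarrow> real \<Rightarrow> real \<Rightarrow> real" where
  "heron a b c = 2 * (a*b + b*c + c*a) - a\<^sup>2 - b\<^sup>2 - c\<^sup>2"

definition cross2 :: "real^2 \<Rightarrow> real^2 \<Rightarrow> real" where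
  "cross2 u v = u$1 * v$2 - u$2 * v$1"

lemma norm_sq_2: "(norm (v::real^2))\<^sup>2 = (v$1)\<^sup>2 + (v$2)\<^sup>2"
  by (simp add: norm_vec_def L2_set_def sum_2)

lemma inner_2: "(u::real^2) \<bullet> v = u$1 * v$1 + u$2 * v$2"
  by (simp add: inner_vec_def sum_2)

lemma heron_formula:
  "heron ((1/2) * (norm u)\<^sup>2) ((1/2) * (norm v)\<^sup>2) ((1/2) * (norm (u + v))\<^sup>2) = (cross2 u v)\<^sup>2"
  unfolding heron_def cross2_def norm_sq_2 by (simp add: power2_eq_square algebra_simps)

definition triangle_region :: "real \<Rightarrow> real \<Rightarrow> real \<Rightarrow> bool" where
  "triangle_region a b c \<longleftrightarrow> heron a b c \<ge> 0 \<and> a \<ge> 0 \<and> b \<ge> 0 \<and> c \<ge> 0"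

(* Shrinking the sides of a degenerate triangle leaves the triangle region at once:
   Q(a-t,b-t,c-t) = Q(a,b,c) - 2t(a+b+c) + 3t^2. *)
lemma degenerate_triangle_shrink:
  assumes region: "triangle_region a b c" and degenerate: "heron a b c = 0" and "\<epsilon> > 0"
  shows "\<exists>t. 0 < t \<and> t < \<epsilon> \<and> \<not> triangle_region (a - t) (b - t) (c - t)"
proof -
  have nonneg: "a \<ge> 0" "b \<ge> 0" "c \<ge> 0"
    using region by (auto simp: triangle_region_def)
  have shrink: "heron (a - t) (b - t) (c - t) = t * (3*t - 2*(a + b + c))" for t
    using degenerate by (simp add: heron_def power2_eq_square algebra_simps)
  show ?thesis
  proof (cases "a + b + c = 0")
    case True
    then have "a = 0" using nonneg by linarith
    then show ?thesis using \<open>\<epsilon> > 0\<close>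
      by (intro exI[of _ "\<epsilon>/2"]) (simp add: triangle_region_def)
  next
    case False
    define t where "t = min (\<epsilon>/2) ((a + b + c)/2)"
    have "t \<le> (a + b + c)/2" unfolding t_def by (rule min.cobounded2)
    moreover have "0 < t" "t < \<epsilon>" using False nonneg \<open>\<epsilon> > 0\<close> unfolding t_def by auto
    ultimately have t: "0 < t" "t < \<epsilon>" "3*t < 2*(a + b + c)" by auto
    then have "heron (a - t) (b - t) (c - t) < 0"
      unfolding shrink by (intro mult_pos_neg) auto
    then show ?thesis using t by (auto simp: triangle_region_def)
  qed
qed

(* If every point of S lies in the triangle region with respect to the coordinates
   a, b, c, then no interior point of S is a degenerate triangle: moving inward along
   -(e_a + e_b + e_c) stays in S but leaves the triangle region. *)
lemma interior_triangle_nondegenerate: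
  fixes S :: "(real^'n) set"
  assumes S: "\<And>y. y \<in> S \<Longrightarrow> triangle_region (y$a) (y$b) (y$c)"
    and p: "p \<in> interior S"
  shows "heron (p$a) (p$b) (p$c) \<noteq> 0"
proof
  assume degenerate: "heron (p$a) (p$b) (p$c) = 0"
  obtain e where "e > 0" and ball: "ball p e \<subseteq> S"
    using p by (auto simp: mem_interior)
  define w :: "real^'n" where "w = (\<chi> k. if k = a \<or> k = b \<or> k = c then -1 else 0)"
  have "p \<in> S" using p interior_subset by blast
  moreover have "e / (norm w + 1) > 0" using \<open>e > 0\<close> by (simp add: add_nonneg_pos)
  ultimately obtain t where t: "0 < t" "t < e / (norm w + 1)"
    and outside: "\<not> triangle_region (p$a - t) (p$b - t) (p$c - t)"
    using degenerate_triangle_shrink[OF S[OF \<open>p \<in> S\<close>] degenerate] by blast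
  have "norm (t *\<^sub>R w) < e"
  proof -
    have "norm (t *\<^sub>R w) \<le> t * (norm w + 1)" using t by simp
    also have "\<dots> < e" using t by (simp add: pos_less_divide_eq add_nonneg_pos)
    finally show ?thesis .
  qed
  then have "p + t *\<^sub>R w \<in> ball p e" by (simp add: dist_norm)
  then have "p + t *\<^sub>R w \<in> S" using ball by blast
  moreover have "(p + t *\<^sub>R w) $ k = p$k - t" if "k \<in> {a, b, c}" for k
    using that by (auto simp: w_def)
  ultimately show False using S outside by fastforce
qed

lemma linear_system_2_solvable:
  assumes "cross2 u v \<noteq> 0"
  shows "\<exists>h::real^2. u \<bullet> h = \<alpha> \<and> v \<bullet> h = \<beta>"
proof -
  define d where "d = cross2 u v"
  define g :: "real^2" where "g = vector [\<alpha> * v$2 - \<beta> * u$2, \<beta> * u$1 - \<alpha> * v$1]"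
  have "u \<bullet> g = \<alpha> * d" "v \<bullet> g = \<beta> * d"
    unfolding g_def d_def inner_2 cross2_def by (simp_all add: algebra_simps)
  then have "u \<bullet> ((1/d) *\<^sub>R g) = \<alpha> \<and> v \<bullet> ((1/d) *\<^sub>R g) = \<beta>"
    using assms by (simp add: d_def)
  then show ?thesis ..
qed

lemma linear_equation_solvable:
  assumes "u \<noteq> (0::'a::real_inner)"
  shows "\<exists>h. u \<bullet> h = \<gamma>"
proof
  show "u \<bullet> ((\<gamma> / (u \<bullet> u)) *\<^sub>R u) = \<gamma>" using assms by simp
qed

lemma exhaust_5:
  fixes k :: 5
  shows "k = 1 \<or> k = 2 \<or> k = 3 \<or> k = 4 \<or> k = 5"
proof (induct k)
  case (of_int z)
  then have "z = 0 \<or> z = 1 \<or> z = 2 \<or> z = 3 \<or> z = 4" by fastforce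
  then show ?case by auto
qed

lemma rigidity_map_components:
  "rigidity_map x h $ 1 = (x$1 - x$2) \<bullet> (h$1 - h$2)"
  "rigidity_map x h $ 2 = (x$2 - x$3) \<bullet> (h$2 - h$3)"
  "rigidity_map x h $ 3 = (x$1 - x$3) \<bullet> (h$1 - h$3)"
  "rigidity_map x h $ 4 = (x$3 - x$4) \<bullet> (h$3 - h$4)"
  "rigidity_map x h $ 5 = (x$1 - x$4) \<bullet> (h$1 - h$4)"
  by (simp_all add: rigidity_map_def edgeE_def)

(* With vertex 1 pinned (h_1 = 0), the velocity h_3 is fixed by edge 13, and then h_2
   and h_4 are each determined by a 2x2 system coming from the triangles 123 and 134. *)
lemma rigidity_map_surj:
  assumes tri1: "cross2 (x$1 - x$2) (x$2 - x$3) \<noteq> 0"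
    and tri2: "cross2 (x$1 - x$3) (x$3 - x$4) \<noteq> 0"
  shows "surj (rigidity_map x)"
proof -
  have "\<exists>h. rigidity_map x h = w" for w
  proof -
    have "x$1 - x$3 \<noteq> 0" using tri2 by (auto simp: cross2_def)
    then obtain h3 where h3: "(x$1 - x$3) \<bullet> h3 = - w$3"
      using linear_equation_solvable by blast
    obtain h2 where h2: "(x$1 - x$2) \<bullet> h2 = - w$1" "(x$2 - x$3) \<bullet> h2 = w$2 + (x$2 - x$3) \<bullet> h3"
      using linear_system_2_solvable[OF tri1] by blast
    have "cross2 (x$1 - x$4) (x$3 - x$4) = cross2 (x$1 - x$3) (x$3 - x$4)"
      by (simp add: cross2_def algebra_simps)
    with tri2 have tri2': "cross2 (x$1 - x$4) (x$3 - x$4) \<noteq> 0" by simp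
    obtain h4 where h4: "(x$1 - x$4) \<bullet> h4 = - w$5" "(x$3 - x$4) \<bullet> h4 = (x$3 - x$4) \<bullet> h3 - w$4"
      using linear_system_2_solvable[OF tri2'] by blast
    define h :: "(real^2)^4" where "h = (\<chi> i. if i = 2 then h2 else if i = 3 then h3 else if i = 4 then h4 else 0)"
    have "h$1 = 0" "h$2 = h2" "h$3 = h3" "h$4 = h4" by (simp_all add: h_def)
    then have "rigidity_map x h $ k = w $ k" for k
      using exhaust_5[of k] h2 h3 h4
      by (auto simp: rigidity_map_components inner_diff_right)
    then show ?thesis by (auto simp: vec_eq_iff)
  qed
  then show ?thesis by (metis surj_def)
qed

lemma deltaE_triangle_regions:
  assumes "y \<in> range deltaE"
  shows "triangle_region (y$1) (y$2) (y$3)" and "triangle_region (y$3) (y$4) (y$5)"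
proof -
  obtain z where y: "y = deltaE z" using assms by auto
  have "triangle_region (deltaE z $ 1) (deltaE z $ 2) (deltaE z $ 3)"
    using heron_formula[of "z$1 - z$2" "z$2 - z$3"]
    by (simp add: triangle_region_def deltaE_def edgeE_def)
  moreover have "triangle_region (deltaE z $ 3) (deltaE z $ 4) (deltaE z $ 5)"
    using heron_formula[of "z$1 - z$3" "z$3 - z$4"]
    by (simp add: triangle_region_def deltaE_def edgeE_def)
  ultimately show "triangle_region (y$1) (y$2) (y$3)" "triangle_region (y$3) (y$4) (y$5)"
    by (simp_all add: y)
qed

theorem lemma4:
  fixes x :: "(real^2)^4"
  assumes "deltaE x \<in> interior (range deltaE)"
  shows "\<exists>D. (deltaE has_derivative D) (at x) \<and> dim (range D) = 2 * 4 - 3"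
proof (intro exI conjI)
  show "(deltaE has_derivative rigidity_map x) (at x)" by (rule deltaE_has_derivative)
  have "heron (deltaE x $ 1) (deltaE x $ 2) (deltaE x $ 3) \<noteq> 0"
    "heron (deltaE x $ 3) (deltaE x $ 4) (deltaE x $ 5) \<noteq> 0"
    using interior_triangle_nondegenerate[OF deltaE_triangle_regions(1) assms]
      interior_triangle_nondegenerate[OF deltaE_triangle_regions(2) assms] by auto
  then have "cross2 (x$1 - x$2) (x$2 - x$3) \<noteq> 0" "cross2 (x$1 - x$3) (x$3 - x$4) \<noteq> 0"
    using heron_formula[of "x$1 - x$2" "x$2 - x$3"] heron_formula[of "x$1 - x$3" "x$3 - x$4"]
    by (simp_all add: deltaE_def edgeE_def)
  then have "range (rigidity_map x) = UNIV" using rigidity_map_surj by blast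
  then show "dim (range (rigidity_map x)) = 2 * 4 - 3" by simp
qed

end
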